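(* Let $V\in\mathbb{R}^{k\times n}$ with columns $v_1,\ldots,v_n$ satisfy $\mathrm{rank}(V)<k$. Let $P=\mathrm{diag}(P_1,\ldots,P_n)\in\mathbb{R}^{nk\times nk}$ be block diagonal with $P_i=I_k-v_iv_i^T$. Then for any $A,B\in\mathbb{R}^{n\times n}$, every (possibly complex) eigenvalue of $AB$ is also an eigenvalue of $J=(A\otimes I_k)\,P\,(B\otimes I_k)$.
   Context: $\otimes$ is the Kronecker product; $I_k$ is the $k\times k$ identity. *)

theory Defs
  imports "HOL-Analysis.Analysis"
begin

definition cmat :: "real^'m^'m \<Rightarrow> complex^'m^'m" where
  "cmat M = (\<chi> i j. complex_of_real (M $ i $ j))"

definition complex_eigenvalue :: "real^'m^'m \<Rightarrow> complex \<Rightarrow> bool" where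
  "complex_eigenvalue M \<mu> \<longleftrightarrow> (\<exists>x::complex^'m. x \<noteq> 0 \<and> cmat M *v x = \<mu> *s x)"

text \<open>Kronecker product; the index (i,a) of the product corresponds to row
  (i-1)k + a in the usual block ordering.\<close>
definition kron :: "real^'n^'m \<Rightarrow> real^'q^'p \<Rightarrow> real^('n \<times> 'q)^('m \<times> 'p)" where
  "kron A B = (\<chi> r c. A $ fst r $ fst c * B $ snd r $ snd c)"

definition blockP :: "real^'n^'k \<Rightarrow> real^('n \<times> 'k)^('n \<times> 'k)" where
  "blockP V = (\<chi> r c. if fst r = fst c then
      (mat 1 :: real^'k^'k) $ snd r $ snd c
        - column (fst r) V $ snd r * column (fst r) V $ snd c else 0)"

end

theory Submission
  imports Defs
begin

text \<open>Since \<open>rank V < k\<close> there is a nonzero \<open>w \<in> \<real>\<^sup>k\<close> orthogonal to every column \<open>v\<^sub>i\<close>,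
  so every \<open>P\<^sub>i\<close> fixes \<open>w\<close> and \<open>P\<close> fixes every vector \<open>x \<otimes> w\<close>. As \<open>(M \<otimes> I\<^sub>k)(x \<otimes> w) = Mx \<otimes> w\<close>,
  this gives \<open>J (x \<otimes> w) = ABx \<otimes> w\<close>, so an eigenvector \<open>x\<close> of \<open>AB\<close> yields the eigenvector
  \<open>x \<otimes> w\<close> of \<open>J\<close> for the same eigenvalue.\<close>

definition tensor_vec :: "complex^'n \<Rightarrow> real^'k \<Rightarrow> complex^('n \<times> 'k)" where
  "tensor_vec u w = (\<chi> r. u $ fst r * of_real (w $ snd r))"

lemma tensor_vec_eq_0_iff: "tensor_vec u w = 0 \<longleftrightarrow> u = 0 \<or> w = 0"
proof
  assume "tensor_vec u w = 0"
  then have "tensor_vec u w $ (i, a) = 0" for i a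
    by simp
  then have "u $ i * of_real (w $ a) = 0" for i a
    by (simp add: tensor_vec_def)
  then show "u = 0 \<or> w = 0"
    by (auto simp: vec_eq_iff)
qed (auto simp: tensor_vec_def vec_eq_iff)

lemma tensor_vec_scale: "tensor_vec (c *s u) w = c *s tensor_vec u w"
  by (simp add: tensor_vec_def vec_eq_iff mult.assoc)

lemma cmat_mult: "cmat (M ** N) = cmat M ** cmat N"
  by (simp add: cmat_def matrix_matrix_mult_def vec_eq_iff of_real_sum)

lemma sum_UNIV_prod: "(\<Sum>c\<in>UNIV. f c) = (\<Sum>j\<in>UNIV. \<Sum>b\<in>UNIV. f (j, b))"
  by (simp add: sum.cartesian_product UNIV_Times_UNIV[symmetric] del: UNIV_Times_UNIV)

lemma cmat_kron_tensor_vec: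
  fixes M :: "real^'n^'n" and N :: "real^'k^'k"
  shows "cmat (kron M N) *v tensor_vec u w = tensor_vec (cmat M *v u) (N *v w)"
proof -
  have "(\<Sum>j\<in>UNIV. \<Sum>b\<in>UNIV. of_real (M $ i $ j * N $ a $ b) * (u $ j * of_real (w $ b)))
      = (\<Sum>j\<in>UNIV. of_real (M $ i $ j) * u $ j) * of_real (\<Sum>b\<in>UNIV. N $ a $ b * w $ b)" for i a
    by (simp add: sum_product of_real_sum mult_ac)
  then show ?thesis
    by (simp add: vec_eq_iff matrix_vector_mult_def cmat_def kron_def tensor_vec_def sum_UNIV_prod)
qed

lemma blockP_nth:
  "blockP V $ (i, a) $ (j, b) = (if i = j then mat 1 $ a $ b - V $ a $ i * V $ b $ i else 0)"
  by (simp add: blockP_def column_def)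

lemma cmat_blockP_tensor_vec:
  fixes V :: "real^'n^'k"
  assumes "transpose V *v w = 0"
  shows "cmat (blockP V) *v tensor_vec u w = tensor_vec u w"
proof -
  have orth: "(\<Sum>b\<in>UNIV. V $ b $ i * w $ b) = 0" for i
    using assms by (simp add: vec_eq_iff matrix_vector_mult_def transpose_def)
  have "(\<Sum>j\<in>UNIV. \<Sum>b\<in>UNIV. of_real (if i = j then mat 1 $ a $ b - V $ a $ i * V $ b $ i else 0)
         * (u $ j * of_real (w $ b)))
      = u $ i * of_real (\<Sum>b\<in>UNIV. (mat 1 $ a $ b - V $ a $ i * V $ b $ i) * w $ b)" for i a
  proof -
    have "of_real (if i = j then mat 1 $ a $ b - V $ a $ i * V $ b $ i else 0) * (u $ j * of_real (w $ b))
        = (if j = i then u $ i * of_real ((mat 1 $ a $ b - V $ a $ i * V $ b $ i) * w $ b) else 0)"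
      for j b
      by (simp add: mult_ac)
    then show ?thesis
      by (subst sum.swap) (simp add: sum_distrib_left)
  qed
  moreover have "(\<Sum>b\<in>UNIV. (mat 1 $ a $ b - V $ a $ i * V $ b $ i) * w $ b) = w $ a" for i a
  proof -
    have "(\<Sum>b\<in>UNIV. mat 1 $ a $ b * w $ b) = w $ a"
      using matrix_vector_mul_lid[of w] by (simp only: vec_eq_iff matrix_vector_mult_def vec_lambda_beta)
    then show ?thesis
      by (simp add: left_diff_distrib sum_subtractf mult.assoc orth flip: sum_distrib_left)
  qed
  ultimately show ?thesis
    by (simp add: vec_eq_iff matrix_vector_mult_def cmat_def blockP_nth tensor_vec_def sum_UNIV_prod)
qed

lemma rank_lt_nrows_imp_left_null_vector:
  fixes V :: "real^'n^'k"
  assumes "rank V < CARD('k)"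
  obtains w where "w \<noteq> 0" and "transpose V *v w = 0"
proof -
  have "rank (transpose V) \<noteq> CARD('k)"
    using assms by (simp add: rank_transpose)
  then show ?thesis
    using matrix_nonfull_linear_equations_eq that by blast
qed

theorem lemma8:
  fixes V :: "real^'n^'k" and A B :: "real^'n^'n" and \<mu> :: complex
  assumes "rank V < CARD('k)"
    and "complex_eigenvalue (A ** B) \<mu>"
  shows "complex_eigenvalue
           (kron A (mat 1 :: real^'k^'k) ** blockP V ** kron B (mat 1 :: real^'k^'k)) \<mu>"
proof -
  obtain w :: "real^'k" where w: "w \<noteq> 0" "transpose V *v w = 0"
    using rank_lt_nrows_imp_left_null_vector[OF assms(1)] .
  obtain x where x: "x \<noteq> 0" "cmat A *v (cmat B *v x) = \<mu> *s x"
    using assms(2) by (auto simp: complex_eigenvalue_def cmat_mult matrix_vector_mul_assoc)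
  have "cmat (kron A (mat 1 :: real^'k^'k) ** blockP V ** kron B (mat 1)) *v tensor_vec x w
      = cmat (kron A (mat 1)) *v (cmat (blockP V) *v (cmat (kron B (mat 1)) *v tensor_vec x w))"
    by (simp only: cmat_mult matrix_vector_mul_assoc matrix_mul_assoc)
  also have "\<dots> = tensor_vec (cmat A *v (cmat B *v x)) w"
    unfolding cmat_kron_tensor_vec cmat_blockP_tensor_vec[OF w(2)] matrix_vector_mul_lid ..
  also have "\<dots> = \<mu> *s tensor_vec x w"
    unfolding x(2) tensor_vec_scale ..
  finally have "cmat (kron A (mat 1 :: real^'k^'k) ** blockP V ** kron B (mat 1)) *v tensor_vec x w
      = \<mu> *s tensor_vec x w" .
  moreover have "tensor_vec x w \<noteq> 0"
    using w(1) x(1) by (simp add: tensor_vec_eq_0_iff)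
  ultimately show ?thesis
    unfolding complex_eigenvalue_def by blast
qed

end
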